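(* In the time-dependent setting below, for $u^0\in l^{\infty,+}$ and $t_0\in\mathbb R$: if $u^0\le d\phi(t_0,\cdot)+d_1\phi_1(t_0,\cdot)$ (resp. $u^0\ge d\phi(t_0,\cdot)-d_1\phi_1(t_0,\cdot)$) with $0<d\le2$ and $d_1$ sufficiently large, then $u(t;t_0,u^0)\le d\phi(t,\cdot)+d_1\phi_1(t,\cdot)$ (resp. $u(t;t_0,u^0)\ge d\phi(t,\cdot)-d_1\phi_1(t,\cdot)$) for all $t\ge t_0$.
   Context: Time-dependent setting: the lattice equation $\dot u_j(t)=\big(u_{j+1}(t)-u_j(t)\big)+\big(u_{j-1}(t)-u_j(t)\big)+u_j(t)f(t,u_j(t))$, $j\in\mathbb Z$ (spatially homogeneous, unit diffusion, which is the normalization behind the formulas below), where $f$ satisfies (H0): locally Hölder in $t$, Lipschitz in $u$, $C^1$ in $u$ for $u\ge0$, $f(t,u)=f(t,0)$ for $u\le0$, $f(t,u)<0$ for $u\ge M_0$, $f_u<0$ for $u\ge0$, $\liminf_{t-s\to\infty}\frac1{t-s}\int_s^tf(\tau,0)d\tau>0$. $u(t;s,u^0)$ is the solution with $u(s;s,u^0)=u^0$; $l^{\infty,+}$ is the set of bounded nonnegative sequences; inequalities componentwise. Let $\bar f_{\inf}=\liminf_{t-s\to\infty}\frac1{t-s}\int_s^tf(\tau,0)d\tau$ and $\tilde c_0^-=\inf_{\mu>0}\frac{e^{-\mu}+e^\mu-2+\bar f_{\inf}}{\mu}$, attained at a unique $\mu^*>0$. Fix $\gamma>\tilde c_0^-$,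 let $0<\mu<\mu^*$ solve $\frac{e^{-\mu}+e^\mu-2+\bar f_{\inf}}{\mu}=\gamma$, and $c(t)=\frac{e^{-\mu}+e^\mu-2+f(t,0)}{\mu}$. Let $\phi(t,j)=e^{-\mu(j-\int_0^tc(\tau)d\tau)}$. Choose $\tilde\mu\in(\mu,2\mu)$ such that $B(t)=-(e^{-\tilde\mu}+e^{\tilde\mu}-2)+c(t)\tilde\mu-f(t,0)$ has $\liminf_{t-s\to\infty}\frac1{t-s}\int_s^tB>0$, and $A\in W^{1,\infty}(\mathbb R)$ with $\operatorname{ess\,inf}_{t}(A'(t)+B(t))>0$. Let $\phi_1(t,j)=e^{A(t)-\tilde\mu(j-\int_0^tc(\tau)d\tau)}$. *)

theory Defs
  imports "HOL-Analysis.Analysis"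
begin

definition oint :: "real \<Rightarrow> real \<Rightarrow> (real \<Rightarrow> real) \<Rightarrow> real" where
  "oint a b g = (if a \<le> b then integral {a..b} g else - integral {b..a} g)"

text \<open>liminf_{t-s \<rightarrow> \<infinity>} (1/(t-s)) int_s^t g, as an extended real.\<close>
definition mean_liminf :: "(real \<Rightarrow> real) \<Rightarrow> ereal" where
  "mean_liminf g = (SUP T::real. INF p \<in> {(s,t). t - s \<ge> T}.
      ereal (integral {fst p..snd p} g / (snd p - fst p)))"

definition H0 :: "(real \<Rightarrow> real \<Rightarrow> real) \<Rightarrow> (real \<Rightarrow> real \<Rightarrow> real) \<Rightarrow> real \<Rightarrow> bool" where
  "H0 f fu M0 \<longleftrightarrow>
     (\<forall>a b R. \<exists>C \<alpha>. C \<ge> 0 \<and> 0 < \<alpha> \<and> \<alpha> \<le> 1 \<and>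
        (\<forall>s\<in>{a..b}. \<forall>t\<in>{a..b}. \<forall>u. \<bar>u\<bar> \<le> R \<longrightarrow> \<bar>f t u - f s u\<bar> \<le> C * \<bar>t - s\<bar> powr \<alpha>)) \<and>
     (\<forall>R. \<exists>L. \<forall>t u v. \<bar>u\<bar> \<le> R \<longrightarrow> \<bar>v\<bar> \<le> R \<longrightarrow> \<bar>f t u - f t v\<bar> \<le> L * \<bar>u - v\<bar>) \<and>
     (\<forall>t u. 0 \<le> u \<longrightarrow> (f t has_real_derivative fu t u) (at u within {0..})) \<and>
     (\<forall>t. continuous_on {0..} (fu t)) \<and>
     (\<forall>t u. u \<le> 0 \<longrightarrow> f t u = f t 0) \<and>
     (\<forall>t u. M0 \<le> u \<longrightarrow> f t u < 0) \<and>
     (\<forall>t u. 0 \<le> u \<longrightarrow> fu t u < 0) \<and>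
     mean_liminf (\<lambda>\<tau>. f \<tau> 0) > 0"

definition lattice_solution :: "(real \<Rightarrow> real \<Rightarrow> real) \<Rightarrow> real \<Rightarrow> (int \<Rightarrow> real) \<Rightarrow> (real \<Rightarrow> int \<Rightarrow> real) \<Rightarrow> bool" where
  "lattice_solution f t0 u0 u \<longleftrightarrow>
     u t0 = u0 \<and>
     (\<forall>T. \<exists>K. \<forall>t\<in>{t0..T}. \<forall>j. \<bar>u t j\<bar> \<le> K) \<and>
     (\<forall>t\<ge>t0. \<forall>j. ((\<lambda>s. u s j) has_real_derivative
         (u t (j+1) - u t j) + (u t (j-1) - u t j) + u t j * f t (u t j)) (at t within {t0..}))"

definition linf_plus :: "(int \<Rightarrow> real) \<Rightarrow> bool" where
  "linf_plus u0 \<longleftrightarrow> (\<forall>j. 0 \<le> u0 j) \<and> (\<exists>K. \<forall>j. u0 j \<le> K)"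

end

theory Submission
  imports Defs
begin

text \<open>Both bounds come from a comparison principle on the infinite lattice, proved with a
  barrier growing like \<open>cosh j\<close>. The front \<open>\<phi>\<close> solves the linearised equation exactly. Since
  \<open>A\<close> is only Lipschitz, \<open>\<phi>\<^sub>1\<close> is replaced by a front in which \<open>A\<close> is replaced, from a
  starting time \<open>r\<close> on, by the \<open>C\<^sup>1\<close> function with value \<open>A r\<close> at \<open>r\<close> and derivative
  \<open>\<delta> - B\<close>; it stays below \<open>A\<close>, and the modified front solves the linearised equation with
  the extra source \<open>\<delta>\<close> times itself. As \<open>f(t,u) \<le> f(t,0)\<close>, \<open>d \<phi> + d\<^sub>1 \<phi>\<^sub>1\<close> (so modified)
  is a supersolution. Where \<open>w = d \<phi> - d\<^sub>1 \<phi>\<^sub>1\<close> is positive, \<open>\<mu> < \<mu>t\<close> forces the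
  \<open>\<phi>\<close>-term to dominate, so \<open>0 < w \<le> 2\<close> and the nonlinear loss \<open>w (f(t,0) - f(t,w)) \<le> L w\<^sup>2\<close>
  is absorbed by the extra source once \<open>d\<^sub>1\<close> is large; hence \<open>w\<close> is a subsolution. This needs
  the smoothed \<open>A\<close> bounded below, which holds only for a time of order one after the restart,
  so the lower bound is propagated in steps of fixed length.\<close>

definition lattice_laplacian :: "(int \<Rightarrow> real) \<Rightarrow> int \<Rightarrow> real" where
  "lattice_laplacian v j = v (j + 1) + v (j - 1) - 2 * v j"

lemma abs_le_two_cosh: "\<bar>x\<bar> \<le> 2 * cosh (x::real)"
proof -
  have "\<bar>x\<bar> \<le> exp \<bar>x\<bar>" using exp_ge_add_one_self[of "\<bar>x\<bar>"] by linarith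
  also have "exp \<bar>x\<bar> \<le> exp x + exp (- x)" by (cases "x \<ge> 0") auto
  finally show ?thesis by (simp add: cosh_field_def)
qed

lemma has_real_derivative_nonneg_at_first_max:
  fixes h :: "real \<Rightarrow> real"
  assumes "(h has_real_derivative D) (at t within {s..})" "s < t" "\<forall>x\<in>{s..<t}. h x < h t"
  shows "0 \<le> D"
proof (rule ccontr)
  assume "\<not> 0 \<le> D"
  then obtain d where "0 < d" and dec: "\<forall>k>0. t - k \<in> {s..} \<longrightarrow> k < d \<longrightarrow> h t < h (t - k)"
    using has_real_derivative_neg_dec_left[OF assms(1)] by force
  define k where "k = min (d / 2) (t - s)"
  have "0 < k" "k < d" "t - k \<in> {s..<t}" using \<open>0 < d\<close> \<open>s < t\<close> unfolding k_def by auto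
  thus False using dec assms(3) by fastforce
qed

lemma first_nonneg_time:
  fixes g :: "'a \<Rightarrow> real \<Rightarrow> real"
  assumes cont: "\<And>j. continuous_on {s..T} (g j)"
    and start: "\<And>j. g j s < 0"
    and tail: "finite J" "\<And>j t. j \<notin> J \<Longrightarrow> t \<in> {s..T} \<Longrightarrow> g j t < 0"
    and hit: "t1 \<in> {s..T}" "0 \<le> g j1 t1"
  obtains ts js where "s < ts" "ts \<le> T" "g js ts = 0" "\<And>j. g j ts \<le> 0"
    "\<And>t. t \<in> {s..<ts} \<Longrightarrow> g js t < 0"
proof -
  define V where "V = {t \<in> {s..T}. \<exists>j. 0 \<le> g j t}"
  have V_eq: "V = (\<Union>j\<in>J. {t \<in> {s..T}. 0 \<le> g j t})"
    unfolding V_def using tail(2) by (force simp: not_less[symmetric])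
  have "closed {t \<in> {s..T}. 0 \<le> g j t}" for j
    by (rule continuous_on_closed_Collect_le[OF continuous_on_const cont closed_atLeastAtMost])
  hence "closed V" unfolding V_eq by (intro closed_UN tail(1) ballI)
  moreover have "t1 \<in> V" using hit unfolding V_def by blast
  moreover have "bdd_below V" unfolding V_def by (auto intro: bdd_belowI[of _ s])
  ultimately have "Inf V \<in> V" using closed_contains_Inf by blast
  define ts where "ts = Inf V"
  have before: "g j t < 0" if "t \<in> {s..<ts}" for j t
  proof -
    have "t \<notin> V" using that \<open>bdd_below V\<close> cInf_lower[of t V] unfolding ts_def by force
    moreover have "t \<in> {s..T}" using that \<open>Inf V \<in> V\<close> unfolding V_def ts_def by auto
    ultimately show ?thesis unfolding V_def by (auto simp: not_le)
  qed
  obtain js where ts: "ts \<in> {s..T}" "0 \<le> g js ts" using \<open>Inf V \<in> V\<close> unfolding V_def ts_def by auto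
  have "s < ts" using ts start[of js] by (cases "ts = s") auto
  have at_ts: "g j ts \<le> 0" for j
  proof (rule ccontr)
    assume "\<not> g j ts \<le> 0"
    have "continuous_on {s..ts} (g j)" by (rule continuous_on_subset[OF cont]) (use ts in auto)
    moreover have "g j s \<le> 0" "0 \<le> g j ts" using start[of j] \<open>\<not> g j ts \<le> 0\<close> by auto
    ultimately obtain x where "s \<le> x" "x \<le> ts" "g j x = 0"
      using IVT'[of "g j" s 0 ts] \<open>s < ts\<close> by auto
    thus False using before[of x j] \<open>\<not> g j ts \<le> 0\<close> by (cases "x = ts") auto
  qed
  show thesis by (rule that[of ts js]) (use \<open>s < ts\<close> ts at_ts at_ts[of js] before in auto)
qed

text \<open>The barrier \<open>\<epsilon> exp (\<Lambda> (t - s)) cosh j\<close> is a strict supersolution because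
  \<open>cosh (j + 1) + cosh (j - 1) = 2 cosh 1 cosh j\<close>; it grows in \<open>j\<close>, so a bounded \<open>z\<close> can
  only reach it first at a finite site, where the differential inequality is violated.\<close>

lemma lattice_barrier:
  fixes z z' :: "real \<Rightarrow> int \<Rightarrow> real"
  assumes \<Lambda>: "0 \<le> \<Lambda>" "K + 2 * cosh 1 - 2 < \<Lambda>" and \<epsilon>: "0 < \<epsilon>"
    and init: "\<forall>j. z s j \<le> 0"
    and bdd: "\<forall>t\<in>{s..T}. \<forall>j. z t j \<le> M"
    and der: "\<forall>t\<in>{s..T}. \<forall>j. ((\<lambda>\<tau>. z \<tau> j) has_real_derivative z' t j) (at t within {s..})"
    and ineq: "\<forall>t\<in>{s..T}. \<forall>j. 0 < z t j \<longrightarrow> z' t j \<le> lattice_laplacian (z t) j + K * z t j"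
  shows "\<forall>t\<in>{s..T}. \<forall>j. z t j < \<epsilon> * exp (\<Lambda> * (t - s)) * cosh (real_of_int j)"
proof (rule ccontr)
  define b where "b t j = \<epsilon> * exp (\<Lambda> * (t - s)) * cosh (real_of_int j)" for t j
  define g where "g j t = z t j - b t j" for j t
  have b_pos: "0 < b t j" for t j unfolding b_def using \<epsilon> by simp
  have b_lap: "lattice_laplacian (b t) j = (2 * cosh 1 - 2) * b t j" for t j
    unfolding lattice_laplacian_def b_def by (simp add: cosh_add cosh_diff algebra_simps)
  have gder: "(g j has_real_derivative z' t j - \<Lambda> * b t j) (at t within {s..})" if "t \<in> {s..T}" for j t
    unfolding g_def b_def using der that by (auto intro!: derivative_eq_intros)
  have cont: "continuous_on {s..T} (g j)" for j
    by (rule DERIV_continuous_on[OF has_field_derivative_subset[OF gder]]) auto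
  have start: "g j s < 0" for j unfolding g_def using init b_pos[of s j] by (metis diff_less_0_iff_less le_less_trans)
  define N where "N = \<lceil>2 * \<bar>M\<bar> / \<epsilon>\<rceil>"
  have tail: "g j t < 0" if "j \<notin> {-N..N}" "t \<in> {s..T}" for j t
  proof -
    have "real_of_int N < \<bar>real_of_int j\<bar>" using that(1) by auto
    moreover have "2 * \<bar>M\<bar> / \<epsilon> \<le> real_of_int N" unfolding N_def by (rule le_of_int_ceiling)
    ultimately have "2 * \<bar>M\<bar> / \<epsilon> < \<bar>real_of_int j\<bar>" by linarith
    hence "2 * \<bar>M\<bar> < \<epsilon> * \<bar>real_of_int j\<bar>" using \<epsilon> by (simp add: pos_divide_less_eq algebra_simps)
    also have "\<dots> \<le> \<epsilon> * (2 * cosh (real_of_int j))"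
      by (intro mult_left_mono abs_le_two_cosh) (use \<epsilon> in simp)
    also have "\<dots> \<le> 2 * b t j"
      unfolding b_def using \<epsilon> \<Lambda>(1) that(2) by (simp add: mult_le_cancel_left1)
    finally have "\<bar>M\<bar> < b t j" by simp
    moreover have "z t j \<le> M" using bdd that(2) by blast
    ultimately show ?thesis unfolding g_def using abs_ge_self[of M] by linarith
  qed
  assume "\<not> ?thesis"
  then obtain t1 j1 where hit: "t1 \<in> {s..T}" "0 \<le> g j1 t1"
    unfolding g_def b_def by (auto simp: not_less)
  obtain ts js where ts: "s < ts" "ts \<le> T" "g js ts = 0" "\<And>j. g j ts \<le> 0"
      "\<And>t. t \<in> {s..<ts} \<Longrightarrow> g js t < 0"
    using first_nonneg_time[where g = g and J = "{-N..N}", OF cont start finite_atLeastAtMost_int tail hit] by blast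
  have "0 \<le> z' ts js - \<Lambda> * b ts js"
    using has_real_derivative_nonneg_at_first_max[OF gder[of ts js]] ts by auto
  moreover have "z' ts js - \<Lambda> * b ts js < 0"
  proof -
    have z_eq: "z ts js = b ts js" using ts(3) unfolding g_def by simp
    have "z' ts js \<le> lattice_laplacian (z ts) js + K * z ts js"
      using ineq[rule_format, of ts js] ts(1,2) z_eq b_pos[of ts js] by simp
    also have "\<dots> \<le> lattice_laplacian (b ts) js + K * b ts js"
      using ts(4)[of "js + 1"] ts(4)[of "js - 1"] z_eq unfolding g_def lattice_laplacian_def by simp
    also have "\<dots> < \<Lambda> * b ts js"
      using mult_strict_right_mono[OF \<Lambda>(2) b_pos[of ts js]] by (simp add: b_lap algebra_simps)
    finally show ?thesis by simp
  qed
  ultimately show False by simp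
qed

lemma lattice_max_principle:
  fixes z z' :: "real \<Rightarrow> int \<Rightarrow> real"
  assumes init: "\<forall>j. z s j \<le> 0"
    and bdd: "\<forall>t\<in>{s..T}. \<forall>j. z t j \<le> M"
    and der: "\<forall>t\<in>{s..T}. \<forall>j. ((\<lambda>\<tau>. z \<tau> j) has_real_derivative z' t j) (at t within {s..})"
    and ineq: "\<forall>t\<in>{s..T}. \<forall>j. 0 < z t j \<longrightarrow> z' t j \<le> lattice_laplacian (z t) j + K * z t j"
  shows "\<forall>t\<in>{s..T}. \<forall>j. z t j \<le> 0"
proof (intro ballI allI, rule ccontr)
  fix t j assume t: "t \<in> {s..T}" and pos: "\<not> z t j \<le> 0"
  define \<Lambda> where "\<Lambda> = max K 0 + 2 * cosh 1"
  define E where "E = exp (\<Lambda> * (t - s)) * cosh (real_of_int j)"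
  have "0 < E" unfolding E_def by simp
  define \<epsilon> where "\<epsilon> = z t j / (2 * E)"
  have "0 < \<epsilon>" unfolding \<epsilon>_def using pos \<open>0 < E\<close> by simp
  have "0 \<le> \<Lambda>" "K + 2 * cosh 1 - 2 < \<Lambda>" unfolding \<Lambda>_def by (simp_all add: add_nonneg_pos)
  with lattice_barrier[OF _ _ \<open>0 < \<epsilon>\<close> init bdd der ineq] t
  have "z t j < \<epsilon> * E" unfolding E_def by (simp add: mult.assoc)
  also have "\<epsilon> * E = z t j / 2" unfolding \<epsilon>_def using \<open>0 < E\<close> by simp
  finally show False using pos by simp
qed

lemma last_level_point:
  fixes h :: "real \<Rightarrow> real"
  assumes cont: "continuous_on {a..b} h" and y: "h b < y" "y \<le> h a" and "a \<le> b"
  obtains s0 where "s0 \<in> {a..<b}" "h s0 = y" "\<And>t. t \<in> {s0<..b} \<Longrightarrow> h t < y"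
proof -
  define V where "V = {t \<in> {a..b}. y \<le> h t}"
  have "closed V" unfolding V_def
    by (intro continuous_on_closed_Collect_le cont continuous_on_const) auto
  moreover have "a \<in> V" using y \<open>a \<le> b\<close> unfolding V_def by auto
  moreover have "bdd_above V" unfolding V_def by (auto intro: bdd_aboveI[of _ b])
  ultimately have "Sup V \<in> V" using closed_contains_Sup by blast
  define s0 where "s0 = Sup V"
  have s0: "s0 \<in> {a..b}" "y \<le> h s0" using \<open>Sup V \<in> V\<close> unfolding s0_def V_def by auto
  have after: "h t < y" if "t \<in> {s0<..b}" for t
  proof -
    have "t \<notin> V" using that cSup_upper[OF _ \<open>bdd_above V\<close>, of t] unfolding s0_def by force
    thus ?thesis using that s0(1) unfolding V_def by auto
  qed
  have "s0 < b" using s0 y(1) by (cases "s0 = b") auto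
  obtain x where "s0 \<le> x" "x \<le> b" "h x = y"
    using IVT2'[of h b y s0] y(1) s0 \<open>s0 < b\<close> continuous_on_subset[OF cont, of "{s0..b}"] by auto
  hence "h s0 = y" using after[of x] by (cases "x = s0") auto
  thus thesis using that \<open>s0 < b\<close> s0(1) after by auto
qed

text \<open>If \<open>g a > g b\<close>, the tilted function \<open>h t = g t + \<epsilon> t\<close> still has \<open>h a > h b\<close>. The
  exceptional null set has a negligible Lipschitz image, so some level \<open>y\<close> between \<open>h b\<close> and
  \<open>h a\<close> is attained only where \<open>g' \<ge> 0\<close>; at the last such point \<open>h\<close> is strictly
  increasing, a contradiction.\<close>

lemma lipschitz_mono_if_AE_deriv_nonneg:
  fixes g :: "real \<Rightarrow> real"
  assumes "a \<le> b" and lip: "L-lipschitz_on {a..b} g"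
    and ae: "AE t in lborel. \<exists>D. (g has_real_derivative D) (at t) \<and> 0 \<le> D"
  shows "g a \<le> g b"
proof (rule ccontr)
  assume "\<not> g a \<le> g b"
  hence "a < b" using \<open>a \<le> b\<close> by (cases "a = b") auto
  define \<epsilon> where "\<epsilon> = (g a - g b) / (2 * (b - a))"
  have "0 < \<epsilon>" using \<open>\<not> g a \<le> g b\<close> \<open>a < b\<close> unfolding \<epsilon>_def by simp
  define h where "h t = g t + \<epsilon> * t" for t
  have "h b < h a"
  proof -
    have "\<epsilon> * (b - a) = (g a - g b) / 2" unfolding \<epsilon>_def using \<open>a < b\<close> by (simp add: field_simps)
    thus ?thesis unfolding h_def using \<open>\<not> g a \<le> g b\<close> by (simp add: algebra_simps)
  qed
  have hlip: "(L + \<epsilon> * 1)-lipschitz_on {a..b} h" unfolding h_def using \<open>0 < \<epsilon>\<close>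
    by (intro lipschitz_on_add lip lipschitz_on_cmult_real_nonneg lipschitz_on_id) auto
  obtain N where N: "N \<in> null_sets lborel" "\<And>t. t \<notin> N \<Longrightarrow> \<exists>D. (g has_real_derivative D) (at t) \<and> 0 \<le> D"
    using AE_E3[OF ae] by auto
  have "negligible N" using N(1) by (simp add: negligible_iff_null_sets null_sets_completionI)
  hence "negligible (N \<inter> {a..b})" by (rule negligible_subset) auto
  hence "negligible (h ` (N \<inter> {a..b}))"
  proof (rule negligible_locally_Lipschitz_image[rotated])
    fix x assume "x \<in> N \<inter> {a..b}"
    thus "\<exists>T B. open T \<and> x \<in> T \<and> (\<forall>y\<in>(N \<inter> {a..b}) \<inter> T. norm (h y - h x) \<le> B * norm (y - x))"
      using lipschitz_onD[OF hlip]
      by (intro exI[of _ UNIV] exI[of _ "L + \<epsilon> * 1"]) (auto simp: dist_real_def)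
  qed simp
  moreover have "\<not> negligible {h b<..<h a}"
    using \<open>h b < h a\<close> negligible_interval(2)[of "h b" "h a"] by (simp add: box_real)
  ultimately have "\<not> {h b<..<h a} \<subseteq> h ` (N \<inter> {a..b})" using negligible_subset by blast
  then obtain y where "y \<in> {h b<..<h a}" "y \<notin> h ` (N \<inter> {a..b})" by blast
  hence y: "h b < y" "y < h a" "y \<notin> h ` (N \<inter> {a..b})" by auto
  obtain s0 where s0: "s0 \<in> {a..<b}" "h s0 = y" "\<And>t. t \<in> {s0<..b} \<Longrightarrow> h t < y"
    using last_level_point[OF lipschitz_on_continuous_on[OF hlip] y(1)] y(2) \<open>a \<le> b\<close> by auto
  have "s0 \<notin> N" using y(3) s0(1,2) by auto
  then obtain D where "(g has_real_derivative D) (at s0)" "0 \<le> D" using N(2) by blast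
  hence "(h has_real_derivative D + \<epsilon>) (at s0)" unfolding h_def by (auto intro!: derivative_eq_intros)
  moreover have "0 < D + \<epsilon>" using \<open>0 \<le> D\<close> \<open>0 < \<epsilon>\<close> by simp
  ultimately obtain d where "0 < d" and inc: "\<forall>k>0. k < d \<longrightarrow> h s0 < h (s0 + k)"
    using DERIV_pos_inc_right by blast
  define k where "k = min (d / 2) (b - s0)"
  have "0 < k" "k < d" "s0 + k \<in> {s0<..b}" using \<open>0 < d\<close> s0(1) unfolding k_def by auto
  thus False using inc s0(2) s0(3)[of "s0 + k"] by fastforce
qed

lemma oint_eq_integral_diff:
  fixes g :: "real \<Rightarrow> real"
  assumes g: "continuous_on UNIV g" and "a \<le> r" "a \<le> t"
  shows "oint r t g = integral {a..t} g - integral {a..r} g"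
proof (cases "r \<le> t")
  case True
  have "g integrable_on {a..t}" by (rule integrable_continuous_interval, rule continuous_on_subset[OF g]) auto
  hence "integral {a..r} g + integral {r..t} g = integral {a..t} g"
    using assms True by (intro Henstock_Kurzweil_Integration.integral_combine) auto
  thus ?thesis using True unfolding oint_def by simp
next
  case False
  have "g integrable_on {a..r}" by (rule integrable_continuous_interval, rule continuous_on_subset[OF g]) auto
  hence "integral {a..t} g + integral {t..r} g = integral {a..r} g"
    using assms False by (intro Henstock_Kurzweil_Integration.integral_combine) auto
  thus ?thesis using False unfolding oint_def by simp
qed

lemma has_real_derivative_oint:
  fixes g :: "real \<Rightarrow> real"
  assumes g: "continuous_on UNIV g"
  shows "((\<lambda>t. oint r t g) has_real_derivative g t) (at t within S)"
proof -
  define a where "a = min r t - 1"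
  have "((\<lambda>u. integral {a..u} g) has_vector_derivative g t) (at t within {a..t+1})"
    by (rule integral_has_vector_derivative) (use continuous_on_subset[OF g] a_def in auto)
  moreover have "at t within {a..t+1} = at t" by (intro at_within_interior) (auto simp: a_def)
  ultimately have "((\<lambda>u. integral {a..u} g - integral {a..r} g) has_real_derivative g t) (at t)"
    by (auto simp: has_real_derivative_iff_has_vector_derivative intro!: derivative_eq_intros)
  hence "((\<lambda>t. oint r t g) has_real_derivative g t) (at t)"
    by (rule has_field_derivative_transform_within_open[where S="{a<..}"])
       (use oint_eq_integral_diff[OF g, of a r] a_def in auto)
  thus ?thesis by (rule has_field_derivative_at_within)
qed

lemma oint_self [simp]: "oint r r g = 0"
  unfolding oint_def by simp

lemma oint_ge:
  fixes g :: "real \<Rightarrow> real"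
  assumes g: "continuous_on UNIV g" and "r \<le> t" and lb: "\<forall>x\<in>{r..t}. - M \<le> g x"
  shows "- M * (t - r) \<le> oint r t g"
proof -
  have "integral {r..t} (\<lambda>x. - M) \<le> integral {r..t} g"
    by (intro integral_le integrable_continuous_interval continuous_on_subset[OF g] continuous_on_const)
       (use lb in auto)
  thus ?thesis using \<open>r \<le> t\<close> unfolding oint_def by (simp add: mult.commute)
qed

lemma real_interval_induct:
  fixes P :: "real \<Rightarrow> bool"
  assumes "0 < h" "a \<le> b" "P a"
    and step: "\<And>s t. a \<le> s \<Longrightarrow> s \<le> t \<Longrightarrow> t \<le> b \<Longrightarrow> t - s \<le> h \<Longrightarrow> P s \<Longrightarrow> P t"
  shows "P b"
proof -
  have "\<forall>t\<in>{a..b}. t \<le> a + real n * h \<longrightarrow> P t" for n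
  proof (induction n)
    case 0
    show ?case using \<open>P a\<close> by auto
  next
    case (Suc n)
    show ?case
    proof (intro ballI impI)
      fix t assume t: "t \<in> {a..b}" "t \<le> a + real (Suc n) * h"
      show "P t"
      proof (cases "t \<le> a + real n * h")
        case True
        thus ?thesis using Suc.IH t(1) by blast
      next
        case False
        have "a \<le> a + real n * h" using \<open>0 < h\<close> by simp
        hence "P (a + real n * h)" using Suc.IH False t(1) by auto
        thus ?thesis using step[of "a + real n * h" t] False t by (auto simp: algebra_simps)
      qed
    qed
  qed
  moreover have "(b - a) / h \<le> real (nat \<lceil>(b - a) / h\<rceil>)" by (rule real_nat_ceiling_ge)
  hence "b \<le> a + real (nat \<lceil>(b - a) / h\<rceil>) * h" using \<open>0 < h\<close> by (simp add: field_simps)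
  ultimately show ?thesis using \<open>a \<le> b\<close> by auto
qed

lemma front_difference_estimate:
  fixes \<mu> \<mu>t d d1 L K \<alpha> x :: real
  assumes \<mu>: "0 < \<mu>" "\<mu> < \<mu>t" "\<mu>t \<le> 2 * \<mu>" and d: "0 < d" "d \<le> 2" and "0 \<le> L"
    and large: "2 \<le> d1 * exp \<alpha>" "4 * L \<le> K * exp \<alpha>"
    and pos: "0 < d * exp (- \<mu> * x) - d1 * exp (\<alpha> - \<mu>t * x)"
  shows "d * exp (- \<mu> * x) - d1 * exp (\<alpha> - \<mu>t * x) \<le> 2"
    and "L * (d * exp (- \<mu> * x) - d1 * exp (\<alpha> - \<mu>t * x))\<^sup>2 \<le> K * exp (\<alpha> - \<mu>t * x)"
proof -
  define w where "w = d * exp (- \<mu> * x) - d1 * exp (\<alpha> - \<mu>t * x)"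
  have split: "exp (\<alpha> - \<mu>t * x) = exp \<alpha> * exp (- \<mu>t * x)" by (simp flip: exp_add)
  have "0 < d1 * exp \<alpha>" using large(1) by linarith
  hence "0 < d1" by (simp add: zero_less_mult_iff)
  have "d * exp (- \<mu>t * x) \<le> 2 * exp (- \<mu>t * x)" using d by simp
  also have "\<dots> \<le> d1 * exp \<alpha> * exp (- \<mu>t * x)" using large(1) by simp
  also have "\<dots> = d1 * exp (\<alpha> - \<mu>t * x)" using split by simp
  finally have "d * exp (- \<mu>t * x) < d * exp (- \<mu> * x)" using pos by linarith
  hence "(\<mu>t - \<mu>) * x > 0" using d by (simp add: algebra_simps)
  hence "0 < x" using \<mu> by (simp add: zero_less_mult_iff)
  have w_le: "w \<le> d * exp (- \<mu> * x)" unfolding w_def using \<open>0 < d1\<close> by simp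
  also have "\<dots> \<le> d" using \<open>0 < x\<close> \<mu>(1) d(1) by (simp add: mult_left_le)
  finally show "w \<le> 2" using d by simp
  have "w\<^sup>2 \<le> (d * exp (- \<mu> * x))\<^sup>2" using pos w_le unfolding w_def by (intro power_mono) auto
  also have "\<dots> = d\<^sup>2 * exp (- (2 * \<mu>) * x)" by (simp add: power_mult_distrib power2_eq_square flip: exp_add)
  also have "\<dots> \<le> 4 * exp (- \<mu>t * x)"
  proof (rule mult_mono)
    show "d\<^sup>2 \<le> 4" using d power_mono[of d 2 2] by simp
    show "exp (- (2 * \<mu>) * x) \<le> exp (- \<mu>t * x)" using \<mu>(3) \<open>0 < x\<close> by (simp add: mult_right_mono)
  qed auto
  finally have "L * w\<^sup>2 \<le> L * (4 * exp (- \<mu>t * x))" using \<open>0 \<le> L\<close> by (rule mult_left_mono)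
  also have "\<dots> = 4 * L * exp (- \<mu>t * x)" by simp
  also have "\<dots> \<le> K * exp \<alpha> * exp (- \<mu>t * x)" using large(2) by simp
  finally show "L * w\<^sup>2 \<le> K * exp (\<alpha> - \<mu>t * x)" using split by (simp add: mult.assoc)
qed

lemma exp_weight_large:
  fixes K L \<delta> d1 a :: real
  assumes "- K \<le> a" "0 \<le> L" "0 < \<delta>" and d1: "max (2 * exp K) (4 * L * exp K / \<delta>) \<le> d1"
  shows "2 \<le> d1 * exp a" and "4 * L \<le> d1 * \<delta> * exp a"
proof -
  have e: "1 \<le> exp K * exp a" using assms(1) by (simp flip: exp_add)
  have "2 \<le> 2 * exp K * exp a" using e by simp
  also have "\<dots> \<le> d1 * exp a" using d1 by (intro mult_right_mono) auto
  finally show "2 \<le> d1 * exp a" .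
  have "4 * L \<le> 4 * L * exp K * exp a"
    using mult_left_mono[OF e, of "4 * L"] \<open>0 \<le> L\<close> by (simp add: mult.assoc)
  also have "4 * L * exp K \<le> d1 * \<delta>" using d1 \<open>0 < \<delta>\<close> by (simp add: pos_divide_le_eq)
  hence "4 * L * exp K * exp a \<le> d1 * \<delta> * exp a" by (intro mult_right_mono) auto
  finally show "4 * L \<le> d1 * \<delta> * exp a" .
qed

lemma lattice_solution_bounded:
  "lattice_solution f t0 u0 u \<Longrightarrow> \<exists>K. \<forall>t\<in>{t0..T}. \<forall>j. \<bar>u t j\<bar> \<le> K"
  unfolding lattice_solution_def by blast

lemma lattice_solution_has_derivative:
  assumes u: "lattice_solution f t0 u0 u" and "t0 \<le> s" "s \<le> t"
  shows "((\<lambda>\<tau>. u \<tau> j) has_real_derivative lattice_laplacian (u t) j + u t j * f t (u t j)) (at t within {s..})"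
proof -
  have "t0 \<le> t" using assms by linarith
  with u have "((\<lambda>\<tau>. u \<tau> j) has_real_derivative
      (u t (j+1) - u t j) + (u t (j-1) - u t j) + u t j * f t (u t j)) (at t within {t0..})"
    unfolding lattice_solution_def by blast
  hence "((\<lambda>\<tau>. u \<tau> j) has_real_derivative lattice_laplacian (u t) j + u t j * f t (u t j)) (at t within {t0..})"
    unfolding lattice_laplacian_def by simp
  thus ?thesis by (rule has_field_derivative_subset) (use \<open>t0 \<le> s\<close> in auto)
qed

locale kpp_lattice =
  fixes f fu :: "real \<Rightarrow> real \<Rightarrow> real" and M0 :: real
  assumes H0: "H0 f fu M0"
begin

lemma f_eq_f0_if_nonpos: "u \<le> 0 \<Longrightarrow> f t u = f t 0"
  using H0 unfolding H0_def by blast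

lemma f_le_f0:
  assumes "0 \<le> u"
  shows "f t u \<le> f t 0"
proof -
  have der: "(f t has_real_derivative fu t x) (at x within {0..})" and neg: "fu t x < 0" if "0 \<le> x" for x
    using H0 that unfolding H0_def by blast+
  have "continuous_on {0..u} (f t)"
    by (rule DERIV_continuous_on[OF has_field_derivative_subset[OF der]]) auto
  moreover have "\<exists>y. (f t has_real_derivative y) (at x) \<and> y \<le> 0" if "0 < x" "x < u" for x
  proof -
    have "at x within {0..} = at x" using that by (intro at_within_interior) auto
    thus ?thesis using der[of x] neg[of x] that by (intro exI[of _ "fu t x"]) auto
  qed
  ultimately show ?thesis using DERIV_nonpos_imp_decreasing_open[of 0 u "f t"] assms by blast
qed

lemma continuous_on_f0: "continuous_on UNIV (\<lambda>t. f t 0)"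
proof -
  have "isCont (\<lambda>t. f t 0) x" for x
  proof -
    have "\<exists>C \<alpha>. C \<ge> 0 \<and> 0 < \<alpha> \<and> \<alpha> \<le> 1 \<and> (\<forall>s\<in>{x-1..x+1}. \<forall>t\<in>{x-1..x+1}. \<forall>u.
        \<bar>u\<bar> \<le> 0 \<longrightarrow> \<bar>f t u - f s u\<bar> \<le> C * \<bar>t - s\<bar> powr \<alpha>)"
      using H0 unfolding H0_def by blast
    then obtain C \<alpha> where "0 < \<alpha>"
      and hoelder: "\<And>t. t \<in> {x-1..x+1} \<Longrightarrow> \<bar>f t 0 - f x 0\<bar> \<le> C * \<bar>t - x\<bar> powr \<alpha>"
      by fastforce
    have "((\<lambda>t. \<bar>t - x\<bar>) \<longlongrightarrow> 0) (at x)"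
      using tendsto_rabs[OF LIM_zero[OF tendsto_ident_at]] by simp
    hence "((\<lambda>t. C * \<bar>t - x\<bar> powr \<alpha>) \<longlongrightarrow> 0) (at x)"
      using \<open>0 < \<alpha>\<close> by (intro tendsto_mult_right_zero tendsto_zero_powrI) auto
    moreover have "\<forall>\<^sub>F t in at x. t \<in> {x-1..x+1}"
      unfolding eventually_at by (rule exI[of _ 1]) (auto simp: dist_real_def)
    hence "\<forall>\<^sub>F t in at x. norm (f t 0 - f x 0) \<le> C * \<bar>t - x\<bar> powr \<alpha>"
      by eventually_elim (use hoelder in simp)
    ultimately have "((\<lambda>t. f t 0 - f x 0) \<longlongrightarrow> 0) (at x)" by (rule Lim_null_comparison[rotated])
    thus ?thesis unfolding isCont_def by (simp add: LIM_zero_iff)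
  qed
  thus ?thesis by (simp add: continuous_on_eq_continuous_at)
qed

lemma f0_bounded:
  obtains K where "\<And>t. t \<in> {a..b} \<Longrightarrow> \<bar>f t 0\<bar> \<le> K"
proof -
  have "continuous_on {a..b} (\<lambda>t. f t 0)" by (rule continuous_on_subset[OF continuous_on_f0]) simp
  then obtain K where "\<And>t. t \<in> {a..b} \<Longrightarrow> norm (f t 0) \<le> K"
    using continuous_on_compact_bound[OF compact_Icc] by metis
  thus thesis by (intro that[of K]) simp
qed

lemma f_lipschitz:
  obtains L where "0 \<le> L" "\<And>t x y. \<bar>x\<bar> \<le> R \<Longrightarrow> \<bar>y\<bar> \<le> R \<Longrightarrow> \<bar>f t x - f t y\<bar> \<le> L * \<bar>x - y\<bar>"
proof -
  obtain L where L: "\<forall>t x y. \<bar>x\<bar> \<le> R \<longrightarrow> \<bar>y\<bar> \<le> R \<longrightarrow> \<bar>f t x - f t y\<bar> \<le> L * \<bar>x - y\<bar>"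
    using H0 unfolding H0_def by blast
  show thesis
  proof (rule that[of "max L 0"])
    fix t x y assume "\<bar>x\<bar> \<le> R" "\<bar>y\<bar> \<le> R"
    hence "\<bar>f t x - f t y\<bar> \<le> L * \<bar>x - y\<bar>" using L by blast
    also have "\<dots> \<le> max L 0 * \<bar>x - y\<bar>" by (intro mult_right_mono) auto
    finally show "\<bar>f t x - f t y\<bar> \<le> max L 0 * \<bar>x - y\<bar>" .
  qed simp
qed

lemma solution_nonneg:
  assumes u: "lattice_solution f t0 u0 u" and u0: "\<forall>j. 0 \<le> u0 j" and "t0 \<le> t"
  shows "0 \<le> u t j"
proof -
  obtain Ku where Ku: "\<forall>\<tau>\<in>{t0..t}. \<forall>j. \<bar>u \<tau> j\<bar> \<le> Ku" using lattice_solution_bounded[OF u] by blast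
  obtain Kf where Kf: "\<And>\<tau>. \<tau> \<in> {t0..t} \<Longrightarrow> \<bar>f \<tau> 0\<bar> \<le> Kf" using f0_bounded by blast
  have "\<forall>\<tau>\<in>{t0..t}. \<forall>j. - u \<tau> j \<le> 0"
  proof (rule lattice_max_principle[where z = "\<lambda>\<tau> j. - u \<tau> j" and M = Ku and K = Kf
        and z' = "\<lambda>\<tau> j. - (lattice_laplacian (u \<tau>) j + u \<tau> j * f \<tau> (u \<tau> j))"])
    show "\<forall>j. - u t0 j \<le> 0" using u u0 unfolding lattice_solution_def by simp
    show "\<forall>\<tau>\<in>{t0..t}. \<forall>j. - u \<tau> j \<le> Ku" using Ku by (force simp: abs_le_iff)
    show "\<forall>\<tau>\<in>{t0..t}. \<forall>j. ((\<lambda>\<tau>. - u \<tau> j) has_real_derivative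
        - (lattice_laplacian (u \<tau>) j + u \<tau> j * f \<tau> (u \<tau> j))) (at \<tau> within {t0..})"
      by (intro ballI allI DERIV_minus lattice_solution_has_derivative[OF u]) auto
    show "\<forall>\<tau>\<in>{t0..t}. \<forall>j. 0 < - u \<tau> j \<longrightarrow> - (lattice_laplacian (u \<tau>) j + u \<tau> j * f \<tau> (u \<tau> j))
        \<le> lattice_laplacian (\<lambda>j. - u \<tau> j) j + Kf * - u \<tau> j"
    proof (intro ballI allI impI)
      fix \<tau> j assume "\<tau> \<in> {t0..t}" "0 < - u \<tau> j"
      hence "f \<tau> (u \<tau> j) = f \<tau> 0" "f \<tau> 0 \<le> Kf"
        using f_eq_f0_if_nonpos[of "u \<tau> j" \<tau>] Kf[of \<tau>] by (auto simp: abs_le_iff)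
      hence "- u \<tau> j * f \<tau> (u \<tau> j) \<le> - u \<tau> j * Kf" using \<open>0 < - u \<tau> j\<close> by (simp add: mult_left_mono)
      thus "- (lattice_laplacian (u \<tau>) j + u \<tau> j * f \<tau> (u \<tau> j))
          \<le> lattice_laplacian (\<lambda>j. - u \<tau> j) j + Kf * - u \<tau> j"
        unfolding lattice_laplacian_def by (simp add: algebra_simps)
    qed
  qed
  thus ?thesis using \<open>t0 \<le> t\<close> by auto
qed

lemma solution_le_supersolution:
  assumes u: "lattice_solution f t0 u0 u" "\<forall>j. 0 \<le> u0 j"
    and v_nonneg: "\<forall>t\<ge>t0. \<forall>j. 0 \<le> v t j"
    and v_deriv: "\<forall>t\<ge>t0. \<forall>j. ((\<lambda>\<tau>. v \<tau> j) has_real_derivative v' t j) (at t within {t0..})"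
    and super: "\<forall>t\<ge>t0. \<forall>j. lattice_laplacian (v t) j + f t 0 * v t j \<le> v' t j"
    and init: "\<forall>j. u0 j \<le> v t0 j" and "t0 \<le> t"
  shows "u t j \<le> v t j"
proof -
  obtain Ku where Ku: "\<forall>\<tau>\<in>{t0..t}. \<forall>j. \<bar>u \<tau> j\<bar> \<le> Ku" using lattice_solution_bounded[OF u(1)] by blast
  obtain Kf where Kf: "\<And>\<tau>. \<tau> \<in> {t0..t} \<Longrightarrow> \<bar>f \<tau> 0\<bar> \<le> Kf" using f0_bounded by blast
  let ?U = "\<lambda>\<tau> j. lattice_laplacian (u \<tau>) j + u \<tau> j * f \<tau> (u \<tau> j)"
  have "\<forall>\<tau>\<in>{t0..t}. \<forall>j. u \<tau> j - v \<tau> j \<le> 0"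
  proof (rule lattice_max_principle[where z = "\<lambda>\<tau> j. u \<tau> j - v \<tau> j" and M = Ku and K = Kf
        and z' = "\<lambda>\<tau> j. ?U \<tau> j - v' \<tau> j"])
    show "\<forall>j. u t0 j - v t0 j \<le> 0" using u(1) init unfolding lattice_solution_def by simp
    show "\<forall>\<tau>\<in>{t0..t}. \<forall>j. u \<tau> j - v \<tau> j \<le> Ku"
    proof (intro ballI allI)
      fix \<tau> j assume "\<tau> \<in> {t0..t}"
      hence "\<bar>u \<tau> j\<bar> \<le> Ku" "0 \<le> v \<tau> j" using Ku v_nonneg by auto
      thus "u \<tau> j - v \<tau> j \<le> Ku" by linarith
    qed
    show "\<forall>\<tau>\<in>{t0..t}. \<forall>j. ((\<lambda>\<tau>. u \<tau> j - v \<tau> j) has_real_derivative ?U \<tau> j - v' \<tau> j) (at \<tau> within {t0..})"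
      using v_deriv by (auto intro!: DERIV_diff lattice_solution_has_derivative[OF u(1)])
    show "\<forall>\<tau>\<in>{t0..t}. \<forall>j. 0 < u \<tau> j - v \<tau> j \<longrightarrow>
        ?U \<tau> j - v' \<tau> j \<le> lattice_laplacian (\<lambda>j. u \<tau> j - v \<tau> j) j + Kf * (u \<tau> j - v \<tau> j)"
    proof (intro ballI allI impI)
      fix \<tau> j assume \<tau>: "\<tau> \<in> {t0..t}" and pos: "0 < u \<tau> j - v \<tau> j"
      have "0 \<le> u \<tau> j" using solution_nonneg[OF u] \<tau> by auto
      hence "u \<tau> j * f \<tau> (u \<tau> j) \<le> u \<tau> j * f \<tau> 0" by (intro mult_left_mono f_le_f0)
      hence A: "u \<tau> j * f \<tau> (u \<tau> j) \<le> f \<tau> 0 * u \<tau> j" by (simp add: mult.commute)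
      have "f \<tau> 0 * (u \<tau> j - v \<tau> j) \<le> Kf * (u \<tau> j - v \<tau> j)"
        using Kf[OF \<tau>] pos by (intro mult_right_mono) (auto simp: abs_le_iff)
      hence B: "f \<tau> 0 * u \<tau> j - f \<tau> 0 * v \<tau> j \<le> Kf * (u \<tau> j - v \<tau> j)" by (simp add: right_diff_distrib)
      have "lattice_laplacian (v \<tau>) j + f \<tau> 0 * v \<tau> j \<le> v' \<tau> j" using super \<tau> by auto
      with A B show "?U \<tau> j - v' \<tau> j \<le> lattice_laplacian (\<lambda>j. u \<tau> j - v \<tau> j) j + Kf * (u \<tau> j - v \<tau> j)"
        unfolding lattice_laplacian_def by argo
    qed
  qed
  thus ?thesis using \<open>t0 \<le> t\<close> by auto
qed

lemma subsolution_le_solution: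
  assumes u: "lattice_solution f t0 u0 u" "\<forall>j. 0 \<le> u0 j" and "t0 \<le> s"
    and w_le: "\<forall>t\<in>{s..T}. \<forall>j. w t j \<le> R"
    and w_deriv: "\<forall>t\<in>{s..T}. \<forall>j. ((\<lambda>\<tau>. w \<tau> j) has_real_derivative w' t j) (at t within {s..})"
    and sub: "\<forall>t\<in>{s..T}. \<forall>j. 0 < w t j \<longrightarrow> w' t j \<le> lattice_laplacian (w t) j + w t j * f t (w t j)"
    and init: "\<forall>j. w s j \<le> u s j"
  shows "\<forall>t\<in>{s..T}. \<forall>j. w t j \<le> u t j"
proof -
  obtain Ku where Ku: "\<forall>\<tau>\<in>{t0..T}. \<forall>j. \<bar>u \<tau> j\<bar> \<le> Ku" using lattice_solution_bounded[OF u(1)] by blast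
  obtain Kf where Kf: "\<And>\<tau>. \<tau> \<in> {t0..T} \<Longrightarrow> \<bar>f \<tau> 0\<bar> \<le> Kf" using f0_bounded by blast
  obtain L where L: "0 \<le> L" "\<And>t x y. \<bar>x\<bar> \<le> max R Ku \<Longrightarrow> \<bar>y\<bar> \<le> max R Ku \<Longrightarrow> \<bar>f t x - f t y\<bar> \<le> L * \<bar>x - y\<bar>"
    using f_lipschitz by blast
  let ?U = "\<lambda>\<tau> j. lattice_laplacian (u \<tau>) j + u \<tau> j * f \<tau> (u \<tau> j)"
  have u_nonneg: "0 \<le> u \<tau> j" if "\<tau> \<in> {s..T}" for \<tau> j
    using solution_nonneg[OF u] that \<open>t0 \<le> s\<close> by auto
  have "\<forall>\<tau>\<in>{s..T}. \<forall>j. w \<tau> j - u \<tau> j \<le> 0"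
  proof (rule lattice_max_principle[where z = "\<lambda>\<tau> j. w \<tau> j - u \<tau> j" and M = R and K = "Kf + Ku * L"
        and z' = "\<lambda>\<tau> j. w' \<tau> j - ?U \<tau> j"])
    show "\<forall>j. w s j - u s j \<le> 0" using init by simp
    show "\<forall>\<tau>\<in>{s..T}. \<forall>j. w \<tau> j - u \<tau> j \<le> R"
    proof (intro ballI allI)
      fix \<tau> j assume "\<tau> \<in> {s..T}"
      hence "w \<tau> j \<le> R" "0 \<le> u \<tau> j" using w_le u_nonneg by auto
      thus "w \<tau> j - u \<tau> j \<le> R" by linarith
    qed
    show "\<forall>\<tau>\<in>{s..T}. \<forall>j. ((\<lambda>\<tau>. w \<tau> j - u \<tau> j) has_real_derivative w' \<tau> j - ?U \<tau> j) (at \<tau> within {s..})"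
      using w_deriv \<open>t0 \<le> s\<close> by (auto intro!: DERIV_diff lattice_solution_has_derivative[OF u(1)])
    show "\<forall>\<tau>\<in>{s..T}. \<forall>j. 0 < w \<tau> j - u \<tau> j \<longrightarrow>
        w' \<tau> j - ?U \<tau> j \<le> lattice_laplacian (\<lambda>j. w \<tau> j - u \<tau> j) j + (Kf + Ku * L) * (w \<tau> j - u \<tau> j)"
    proof (intro ballI allI impI)
      fix \<tau> j assume \<tau>: "\<tau> \<in> {s..T}" and pos: "0 < w \<tau> j - u \<tau> j"
      have "\<tau> \<in> {t0..T}" using \<tau> \<open>t0 \<le> s\<close> by auto
      have u_le: "0 \<le> u \<tau> j" "u \<tau> j \<le> Ku" using u_nonneg[OF \<tau>] Ku \<open>\<tau> \<in> {t0..T}\<close> by (auto simp: abs_le_iff)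
      have w_pos: "0 < w \<tau> j" "w \<tau> j \<le> R" using pos u_le w_le \<tau> by auto
      have "f \<tau> (w \<tau> j) \<le> Kf"
        using f_le_f0[of "w \<tau> j" \<tau>] Kf[OF \<open>\<tau> \<in> {t0..T}\<close>] w_pos by (auto simp: abs_le_iff)
      hence A: "w \<tau> j * f \<tau> (w \<tau> j) - u \<tau> j * f \<tau> (w \<tau> j) \<le> Kf * w \<tau> j - Kf * u \<tau> j"
        using mult_right_mono[of "f \<tau> (w \<tau> j)" Kf "w \<tau> j - u \<tau> j"] pos by (simp add: algebra_simps)
      have "f \<tau> (w \<tau> j) - f \<tau> (u \<tau> j) \<le> L * (w \<tau> j - u \<tau> j)"
        using L(2)[of "w \<tau> j" "u \<tau> j" \<tau>] w_pos u_le pos by (auto simp: abs_le_iff le_max_iff_disj)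
      hence "u \<tau> j * (f \<tau> (w \<tau> j) - f \<tau> (u \<tau> j)) \<le> u \<tau> j * (L * (w \<tau> j - u \<tau> j))"
        using u_le by (intro mult_left_mono) auto
      also have "\<dots> \<le> Ku * (L * (w \<tau> j - u \<tau> j))"
        using u_le pos L(1) by (intro mult_right_mono) auto
      finally have "u \<tau> j * (f \<tau> (w \<tau> j) - f \<tau> (u \<tau> j)) \<le> Ku * (L * (w \<tau> j - u \<tau> j))" .
      hence B: "u \<tau> j * f \<tau> (w \<tau> j) - u \<tau> j * f \<tau> (u \<tau> j) \<le> Ku * L * w \<tau> j - Ku * L * u \<tau> j"
        by (simp add: algebra_simps)
      have E: "(Kf + Ku * L) * (w \<tau> j - u \<tau> j) = Kf * w \<tau> j - Kf * u \<tau> j + (Ku * L * w \<tau> j - Ku * L * u \<tau> j)"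
        by (simp add: algebra_simps)
      have "w' \<tau> j \<le> lattice_laplacian (w \<tau>) j + w \<tau> j * f \<tau> (w \<tau> j)" using sub \<tau> w_pos by blast
      with A B E show "w' \<tau> j - ?U \<tau> j
          \<le> lattice_laplacian (\<lambda>j. w \<tau> j - u \<tau> j) j + (Kf + Ku * L) * (w \<tau> j - u \<tau> j)"
        unfolding lattice_laplacian_def by argo
    qed
  qed
  thus ?thesis by auto
qed

end

locale lattice_front = kpp_lattice +
  fixes \<mu> \<mu>t \<delta> :: real and c B A :: "real \<Rightarrow> real"
  assumes mu_pos: "0 < \<mu>" and mut: "\<mu> < \<mu>t" "\<mu>t < 2 * \<mu>" and delta_pos: "0 < \<delta>"
    and c_eq: "c t = (exp (- \<mu>) + exp \<mu> - 2 + f t 0) / \<mu>"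
    and B_eq: "B t = - (exp (- \<mu>t) + exp \<mu>t - 2) + c t * \<mu>t - f t 0"
    and A_bounded: "\<exists>K. \<forall>t. \<bar>A t\<bar> \<le> K"
    and A_lipschitz: "\<exists>L. L-lipschitz_on UNIV A"
    and A_deriv_B: "AE t in lborel. \<exists>D. (A has_real_derivative D) (at t) \<and> \<delta> \<le> D + B t"
begin

definition phase :: "real \<Rightarrow> real" where
  "phase t = oint 0 t c"

definition front :: "real \<Rightarrow> int \<Rightarrow> real" where
  "front t j = exp (- \<mu> * (real_of_int j - phase t))"

definition front1 :: "real \<Rightarrow> int \<Rightarrow> real" where
  "front1 t j = exp (A t - \<mu>t * (real_of_int j - phase t))"

definition smoothA :: "real \<Rightarrow> real \<Rightarrow> real" where
  "smoothA r t = A r + oint r t (\<lambda>\<tau>. \<delta> - B \<tau>)"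

definition front1_from :: "real \<Rightarrow> real \<Rightarrow> int \<Rightarrow> real" where
  "front1_from r t j = exp (smoothA r t - \<mu>t * (real_of_int j - phase t))"

lemma continuous_on_c: "continuous_on UNIV c"
proof -
  have "c = (\<lambda>t. (exp (- \<mu>) + exp \<mu> - 2 + f t 0) / \<mu>)" using c_eq by auto
  thus ?thesis using mu_pos by (auto intro!: continuous_intros continuous_on_f0)
qed

lemma continuous_on_B: "continuous_on UNIV B"
proof -
  have "B = (\<lambda>t. - (exp (- \<mu>t) + exp \<mu>t - 2) + c t * \<mu>t - f t 0)" using B_eq by auto
  thus ?thesis by (auto intro!: continuous_intros continuous_on_f0 continuous_on_c)
qed

lemma has_real_derivative_phase: "(phase has_real_derivative c t) (at t within S)"
  unfolding phase_def[abs_def] by (rule has_real_derivative_oint[OF continuous_on_c])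

lemma has_real_derivative_smoothA: "(smoothA r has_real_derivative \<delta> - B t) (at t within S)"
proof -
  have "((\<lambda>t. oint r t (\<lambda>\<tau>. \<delta> - B \<tau>)) has_real_derivative \<delta> - B t) (at t within S)"
    by (rule has_real_derivative_oint) (intro continuous_intros continuous_on_B)
  thus ?thesis unfolding smoothA_def[abs_def] using DERIV_add[OF DERIV_const] by fastforce
qed

lemma smoothA_self [simp]: "smoothA r r = A r"
  unfolding smoothA_def by simp

lemma smoothA_le_A:
  assumes "r \<le> t"
  shows "smoothA r t \<le> A t"
proof -
  obtain LA where LA: "LA-lipschitz_on UNIV A" using A_lipschitz by blast
  have "continuous_on {r..t} (\<lambda>x. \<delta> - B x)"
    by (rule continuous_on_subset[OF continuous_on_B[THEN continuous_on_diff[OF continuous_on_const]]]) simp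
  then obtain M where M: "\<And>x. x \<in> {r..t} \<Longrightarrow> norm (\<delta> - B x) \<le> M"
    using continuous_on_compact_bound[OF compact_Icc] by metis
  have "M-lipschitz_on {r..t} (smoothA r)"
  proof (rule lipschitz_onI)
    show "dist (smoothA r x) (smoothA r y) \<le> M * dist x y" if "x \<in> {r..t}" "y \<in> {r..t}" for x y
      unfolding dist_norm
      by (rule field_differentiable_bound[OF convex_real_interval(5) has_real_derivative_smoothA M that])
    have "norm (\<delta> - B r) \<le> M" using M[of r] assms by simp
    thus "0 \<le> M" using norm_ge_zero order_trans by blast
  qed
  hence "(LA + M)-lipschitz_on {r..t} (\<lambda>x. A x - smoothA r x)"
    by (intro lipschitz_on_diff lipschitz_on_subset[OF LA]) auto
  moreover have "AE x in lborel. \<exists>D. ((\<lambda>x. A x - smoothA r x) has_real_derivative D) (at x) \<and> 0 \<le> D"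
    using A_deriv_B
  proof eventually_elim
    case (elim x)
    then obtain D where "(A has_real_derivative D) (at x)" "\<delta> \<le> D + B x" by blast
    thus ?case by (intro exI[of _ "D - (\<delta> - B x)"]) (auto intro!: DERIV_diff has_real_derivative_smoothA)
  qed
  ultimately have "A r - smoothA r r \<le> A t - smoothA r t"
    using assms by (rule lipschitz_mono_if_AE_deriv_nonneg[rotated 1])
  thus ?thesis by simp
qed

lemma smoothA_ge:
  assumes "r \<le> t" and M: "\<forall>x\<in>{r..t}. \<bar>\<delta> - B x\<bar> \<le> M"
  shows "A r - M * (t - r) \<le> smoothA r t"
proof -
  have "\<forall>x\<in>{r..t}. - M \<le> \<delta> - B x" using M by (auto simp: abs_le_iff)
  hence "- M * (t - r) \<le> oint r t (\<lambda>\<tau>. \<delta> - B \<tau>)"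
    by (intro oint_ge continuous_intros continuous_on_B assms(1))
  thus ?thesis unfolding smoothA_def by simp
qed

lemma front1_from_le_front1: "r \<le> t \<Longrightarrow> front1_from r t j \<le> front1 t j"
  unfolding front1_from_def front1_def using smoothA_le_A by simp

lemma front1_from_self [simp]: "front1_from r r j = front1 r j"
  unfolding front1_from_def front1_def by simp

lemma front_has_derivative:
  "((\<lambda>\<tau>. front \<tau> j) has_real_derivative lattice_laplacian (front t) j + f t 0 * front t j) (at t within S)"
proof -
  have "((\<lambda>\<tau>. front \<tau> j) has_real_derivative \<mu> * c t * front t j) (at t within S)"
    unfolding front_def by (auto intro!: derivative_eq_intros has_real_derivative_phase simp: algebra_simps)
  moreover have "\<mu> * c t * front t j = lattice_laplacian (front t) j + f t 0 * front t j"
  proof -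
    have "\<mu> * c t = (exp (- \<mu>) + exp \<mu> - 2) + f t 0" using c_eq[of t] mu_pos by simp
    moreover have "lattice_laplacian (front t) j = (exp (- \<mu>) + exp \<mu> - 2) * front t j"
      unfolding lattice_laplacian_def front_def by (simp add: algebra_simps flip: exp_add)
    ultimately show ?thesis by (simp only: distrib_right)
  qed
  ultimately show ?thesis by (rule DERIV_cong)
qed

lemma front1_from_has_derivative:
  "((\<lambda>\<tau>. front1_from r \<tau> j) has_real_derivative
     lattice_laplacian (front1_from r t) j + (f t 0 + \<delta>) * front1_from r t j) (at t within S)"
proof -
  have "((\<lambda>\<tau>. front1_from r \<tau> j) has_real_derivative (\<delta> - B t + \<mu>t * c t) * front1_from r t j) (at t within S)"
    unfolding front1_from_def
    by (auto intro!: derivative_eq_intros has_real_derivative_smoothA has_real_derivative_phase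
        simp: algebra_simps)
  moreover have "(\<delta> - B t + \<mu>t * c t) * front1_from r t j
      = lattice_laplacian (front1_from r t) j + (f t 0 + \<delta>) * front1_from r t j"
  proof -
    have "\<delta> - B t + \<mu>t * c t = (exp (- \<mu>t) + exp \<mu>t - 2) + (f t 0 + \<delta>)" using B_eq[of t] by simp
    moreover have "lattice_laplacian (front1_from r t) j = (exp (- \<mu>t) + exp \<mu>t - 2) * front1_from r t j"
      unfolding lattice_laplacian_def front1_from_def by (simp add: algebra_simps flip: exp_add)
    ultimately show ?thesis by (simp only: distrib_right)
  qed
  ultimately show ?thesis by (rule DERIV_cong)
qed

lemma solution_le_upper_front:
  assumes u: "lattice_solution f t0 u0 u" "\<forall>j. 0 \<le> u0 j" and "0 \<le> d" "0 \<le> d1"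
    and init: "\<forall>j. u0 j \<le> d * front t0 j + d1 * front1 t0 j" and "t0 \<le> t"
  shows "u t j \<le> d * front t j + d1 * front1 t j"
proof -
  let ?v = "\<lambda>\<tau> j. d * front \<tau> j + d1 * front1_from t0 \<tau> j"
  let ?v' = "\<lambda>\<tau> j. lattice_laplacian (?v \<tau>) j + f \<tau> 0 * ?v \<tau> j + d1 * \<delta> * front1_from t0 \<tau> j"
  have "u t j \<le> ?v t j"
  proof (rule solution_le_supersolution[OF u, where v' = ?v'])
    show "\<forall>\<tau>\<ge>t0. \<forall>j. 0 \<le> ?v \<tau> j" using \<open>0 \<le> d\<close> \<open>0 \<le> d1\<close> by (simp add: front_def front1_from_def)
    show "\<forall>\<tau>\<ge>t0. \<forall>j. ((\<lambda>\<tau>. ?v \<tau> j) has_real_derivative ?v' \<tau> j) (at \<tau> within {t0..})"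
    proof (intro allI impI)
      fix \<tau> j
      have "((\<lambda>\<tau>. ?v \<tau> j) has_real_derivative
          d * (lattice_laplacian (front \<tau>) j + f \<tau> 0 * front \<tau> j)
          + d1 * (lattice_laplacian (front1_from t0 \<tau>) j + (f \<tau> 0 + \<delta>) * front1_from t0 \<tau> j)) (at \<tau> within {t0..})"
        by (intro DERIV_add DERIV_cmult front_has_derivative front1_from_has_derivative)
      thus "((\<lambda>\<tau>. ?v \<tau> j) has_real_derivative ?v' \<tau> j) (at \<tau> within {t0..})"
        by (rule DERIV_cong) (simp add: lattice_laplacian_def algebra_simps)
    qed
    show "\<forall>\<tau>\<ge>t0. \<forall>j. lattice_laplacian (?v \<tau>) j + f \<tau> 0 * ?v \<tau> j \<le> ?v' \<tau> j"
      using \<open>0 \<le> d1\<close> delta_pos by (simp add: front1_from_def)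
    show "\<forall>j. u0 j \<le> ?v t0 j" using init by simp
  qed fact
  also have "\<dots> \<le> d * front t j + d1 * front1 t j"
    using front1_from_le_front1[OF \<open>t0 \<le> t\<close>] \<open>0 \<le> d1\<close> by (simp add: mult_left_mono)
  finally show ?thesis .
qed

lemma solution_ge_lower_front_on_interval:
  assumes u: "lattice_solution f t0 u0 u" "\<forall>j. 0 \<le> u0 j" and "t0 \<le> s" and d: "0 < d" "d \<le> 2"
    and L: "0 \<le> L" "\<And>t x y. \<bar>x\<bar> \<le> 2 \<Longrightarrow> \<bar>y\<bar> \<le> 2 \<Longrightarrow> \<bar>f t x - f t y\<bar> \<le> L * \<bar>x - y\<bar>"
    and large: "\<And>\<sigma>. \<sigma> \<in> {s..T} \<Longrightarrow> 2 \<le> d1 * exp (smoothA s \<sigma>) \<and> 4 * L \<le> d1 * \<delta> * exp (smoothA s \<sigma>)"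
    and init: "\<forall>j. d * front s j - d1 * front1 s j \<le> u s j"
  shows "\<forall>\<sigma>\<in>{s..T}. \<forall>j. d * front \<sigma> j - d1 * front1 \<sigma> j \<le> u \<sigma> j"
proof -
  define w where "w \<sigma> j = d * front \<sigma> j - d1 * front1_from s \<sigma> j" for \<sigma> j
  let ?w' = "\<lambda>\<sigma> j. lattice_laplacian (w \<sigma>) j + f \<sigma> 0 * w \<sigma> j - d1 * \<delta> * front1_from s \<sigma> j"
  have est: "w \<sigma> j \<le> 2 \<and> L * (w \<sigma> j)\<^sup>2 \<le> d1 * \<delta> * front1_from s \<sigma> j" if "\<sigma> \<in> {s..T}" "0 < w \<sigma> j" for \<sigma> j
    using front_difference_estimate[OF mu_pos mut(1) less_imp_le[OF mut(2)] d L(1)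
        large[OF that(1), THEN conjunct1] large[OF that(1), THEN conjunct2]] that(2)
    unfolding w_def front_def front1_from_def by blast
  have "\<forall>\<sigma>\<in>{s..T}. \<forall>j. w \<sigma> j \<le> u \<sigma> j"
  proof (rule subsolution_le_solution[OF u \<open>t0 \<le> s\<close>, where R = 2 and w' = ?w'])
    show "\<forall>\<sigma>\<in>{s..T}. \<forall>j. w \<sigma> j \<le> 2" using est by force
    show "\<forall>\<sigma>\<in>{s..T}. \<forall>j. ((\<lambda>\<tau>. w \<tau> j) has_real_derivative ?w' \<sigma> j) (at \<sigma> within {s..})"
    proof (intro ballI allI)
      fix \<sigma> j
      have "((\<lambda>\<tau>. w \<tau> j) has_real_derivative
          d * (lattice_laplacian (front \<sigma>) j + f \<sigma> 0 * front \<sigma> j)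
          - d1 * (lattice_laplacian (front1_from s \<sigma>) j + (f \<sigma> 0 + \<delta>) * front1_from s \<sigma> j)) (at \<sigma> within {s..})"
        unfolding w_def by (intro DERIV_diff DERIV_cmult front_has_derivative front1_from_has_derivative)
      thus "((\<lambda>\<tau>. w \<tau> j) has_real_derivative ?w' \<sigma> j) (at \<sigma> within {s..})"
        by (rule DERIV_cong) (simp add: w_def lattice_laplacian_def algebra_simps)
    qed
    show "\<forall>\<sigma>\<in>{s..T}. \<forall>j. 0 < w \<sigma> j \<longrightarrow> ?w' \<sigma> j \<le> lattice_laplacian (w \<sigma>) j + w \<sigma> j * f \<sigma> (w \<sigma> j)"
    proof (intro ballI allI impI)
      fix \<sigma> j assume \<sigma>: "\<sigma> \<in> {s..T}" and pos: "0 < w \<sigma> j"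
      have "f \<sigma> 0 - f \<sigma> (w \<sigma> j) \<le> L * w \<sigma> j"
        using L(2)[of "w \<sigma> j" 0 \<sigma>] est[OF \<sigma> pos] pos by (simp add: abs_le_iff)
      hence "w \<sigma> j * (f \<sigma> 0 - f \<sigma> (w \<sigma> j)) \<le> w \<sigma> j * (L * w \<sigma> j)"
        using pos by (intro mult_left_mono) auto
      also have "\<dots> \<le> d1 * \<delta> * front1_from s \<sigma> j" using est[OF \<sigma> pos] by (simp add: power2_eq_square mult.left_commute)
      finally show "?w' \<sigma> j \<le> lattice_laplacian (w \<sigma>) j + w \<sigma> j * f \<sigma> (w \<sigma> j)"
        by (simp add: algebra_simps)
    qed
    show "\<forall>j. w s j \<le> u s j" using init by (simp add: w_def)
  qed
  moreover have "d * front \<sigma> j - d1 * front1 \<sigma> j \<le> w \<sigma> j" if "\<sigma> \<in> {s..T}" for \<sigma> j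
  proof -
    have "0 < d1 * exp (smoothA s \<sigma>)" using large[OF that] by linarith
    hence "0 < d1" by (simp add: zero_less_mult_iff)
    thus ?thesis unfolding w_def using front1_from_le_front1[of s \<sigma> j] that by simp
  qed
  ultimately show ?thesis by (meson order_trans)
qed

lemma solution_ge_lower_front:
  obtains D1 where "\<And>d1 d t0 u0 u t j. D1 \<le> d1 \<Longrightarrow> 0 < d \<Longrightarrow> d \<le> 2 \<Longrightarrow> lattice_solution f t0 u0 u \<Longrightarrow>
      \<forall>j. 0 \<le> u0 j \<Longrightarrow> \<forall>j. d * front t0 j - d1 * front1 t0 j \<le> u0 j \<Longrightarrow> t0 \<le> t \<Longrightarrow>
      d * front t j - d1 * front1 t j \<le> u t j"
proof -
  obtain KA where KA: "\<And>t. \<bar>A t\<bar> \<le> KA" using A_bounded by blast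
  obtain L where L: "0 \<le> L" "\<And>t x y. \<bar>x\<bar> \<le> 2 \<Longrightarrow> \<bar>y\<bar> \<le> 2 \<Longrightarrow> \<bar>f t x - f t y\<bar> \<le> L * \<bar>x - y\<bar>"
    using f_lipschitz by blast
  show thesis
  proof (rule that[of "max (2 * exp (KA + 1)) (4 * L * exp (KA + 1) / \<delta>)"])
    fix d1 d t0 u0 u t j
    assume d1: "max (2 * exp (KA + 1)) (4 * L * exp (KA + 1) / \<delta>) \<le> d1" and d: "0 < d" "d \<le> 2"
      and u: "lattice_solution f t0 u0 u" "\<forall>j. 0 \<le> u0 j"
      and init: "\<forall>j. d * front t0 j - d1 * front1 t0 j \<le> u0 j" and "t0 \<le> t"
    have "continuous_on {t0..t} (\<lambda>x. \<delta> - B x)"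
      by (rule continuous_on_subset[OF continuous_on_B[THEN continuous_on_diff[OF continuous_on_const]]]) simp
    then obtain M where M: "0 \<le> M" "\<And>x. x \<in> {t0..t} \<Longrightarrow> norm (\<delta> - B x) \<le> M"
      using continuous_on_compact_bound[OF compact_Icc] by metis
    define h where "h = 1 / (M + 1)"
    have "0 < h" using M(1) unfolding h_def by simp
    have large: "2 \<le> d1 * exp (smoothA s \<sigma>) \<and> 4 * L \<le> d1 * \<delta> * exp (smoothA s \<sigma>)"
      if "t0 \<le> s" "s \<le> \<sigma>" "\<sigma> \<le> t" "\<sigma> - s \<le> h" for s \<sigma>
    proof -
      have "M * (\<sigma> - s) \<le> M * h" using that(4) M(1) by (rule mult_left_mono)
      also have "\<dots> \<le> 1" unfolding h_def using M(1) by (simp add: field_simps)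
      finally have "M * (\<sigma> - s) \<le> 1" .
      moreover have "A s - M * (\<sigma> - s) \<le> smoothA s \<sigma>" using smoothA_ge[OF that(2)] M(2) that(1,3) by auto
      ultimately have "- (KA + 1) \<le> smoothA s \<sigma>" using KA[of s] by (simp add: abs_le_iff)
      thus ?thesis using exp_weight_large[OF _ L(1) delta_pos d1] by blast
    qed
    let ?P = "\<lambda>\<sigma>. \<forall>j. d * front \<sigma> j - d1 * front1 \<sigma> j \<le> u \<sigma> j"
    have "?P t"
    proof (rule real_interval_induct[where P = ?P, OF \<open>0 < h\<close> \<open>t0 \<le> t\<close>])
      show "?P t0" using init u(1) unfolding lattice_solution_def by simp
      fix s \<sigma> assume s: "t0 \<le> s" "s \<le> \<sigma>" "\<sigma> \<le> t" "\<sigma> - s \<le> h" "?P s"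
      have "2 \<le> d1 * exp (smoothA s \<sigma>') \<and> 4 * L \<le> d1 * \<delta> * exp (smoothA s \<sigma>')" if "\<sigma>' \<in> {s..\<sigma>}" for \<sigma>'
        using large[of s \<sigma>'] that s by auto
      from solution_ge_lower_front_on_interval[where T = \<sigma>, OF u \<open>t0 \<le> s\<close> d L this s(5)] show "?P \<sigma>"
        using s(2) by auto
    qed
    thus "d * front t j - d1 * front1 t j \<le> u t j" by blast
  qed
qed

end

theorem proposition4p1:
  fixes f fu :: "real \<Rightarrow> real \<Rightarrow> real" and M0 fbar \<mu>s \<gamma> \<mu> \<mu>t :: real
    and c B A :: "real \<Rightarrow> real" and \<phi> \<phi>1 :: "real \<Rightarrow> int \<Rightarrow> real"
  assumes hf: "H0 f fu M0"
    and fbar: "mean_liminf (\<lambda>\<tau>. f \<tau> 0) = ereal fbar"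
    and mus_pos: "\<mu>s > 0"
    and mus_min: "\<forall>m>0. m \<noteq> \<mu>s \<longrightarrow>
        (exp (-\<mu>s) + exp \<mu>s - 2 + fbar) / \<mu>s < (exp (-m) + exp m - 2 + fbar) / m"
    and gamma: "\<gamma> > (INF m\<in>{0<..}. (exp (-m) + exp m - 2 + fbar) / m)"
    and mu: "0 < \<mu>" "\<mu> < \<mu>s" "(exp (-\<mu>) + exp \<mu> - 2 + fbar) / \<mu> = \<gamma>"
    and c_def: "\<And>t. c t = (exp (-\<mu>) + exp \<mu> - 2 + f t 0) / \<mu>"
    and phi_def: "\<And>t j. \<phi> t j = exp (-\<mu> * (real_of_int j - oint 0 t c))"
    and mut: "\<mu> < \<mu>t" "\<mu>t < 2 * \<mu>"
    and B_def: "\<And>t. B t = -(exp (-\<mu>t) + exp \<mu>t - 2) + c t * \<mu>t - f t 0"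
    and B_pos: "mean_liminf B > 0"
    and A_bdd: "\<exists>K. \<forall>t. \<bar>A t\<bar> \<le> K"
    and A_lip: "\<exists>L. L-lipschitz_on UNIV A"
    and A_B: "\<exists>\<delta>>0. AE t in lborel. \<exists>D. (A has_real_derivative D) (at t) \<and> D + B t \<ge> \<delta>"
    and phi1_def: "\<And>t j. \<phi>1 t j = exp (A t - \<mu>t * (real_of_int j - oint 0 t c))"
  shows "\<exists>D1. \<forall>d1\<ge>D1. \<forall>d. 0 < d \<and> d \<le> 2 \<longrightarrow>
           (\<forall>t0 u0 u. linf_plus u0 \<and> lattice_solution f t0 u0 u \<longrightarrow>
              ((\<forall>j. u0 j \<le> d * \<phi> t0 j + d1 * \<phi>1 t0 j) \<longrightarrow>
                  (\<forall>t\<ge>t0. \<forall>j. u t j \<le> d * \<phi> t j + d1 * \<phi>1 t j)) \<and>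
              ((\<forall>j. u0 j \<ge> d * \<phi> t0 j - d1 * \<phi>1 t0 j) \<longrightarrow>
                  (\<forall>t\<ge>t0. \<forall>j. u t j \<ge> d * \<phi> t j - d1 * \<phi>1 t j)))"
proof -
  txt \<open>The hypotheses on \<open>\<mu>s\<close>, \<open>\<gamma>\<close> and the mean of \<open>B\<close> only guarantee that admissible
    \<open>\<mu>t\<close> and \<open>A\<close> exist; the argument uses (A_B) directly.\<close>
  obtain \<delta> where "0 < \<delta>" and A_deriv_B: "AE t in lborel. \<exists>D. (A has_real_derivative D) (at t) \<and> \<delta> \<le> D + B t"
    using A_B by blast
  interpret lattice_front f fu M0 \<mu> \<mu>t \<delta> c B A
    by unfold_locales (use hf mu(1) mut \<open>0 < \<delta>\<close> c_def B_def A_bdd A_lip A_deriv_B in auto)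
  have \<phi>_eq: "\<phi> = front" and \<phi>1_eq: "\<phi>1 = front1"
    by (simp_all add: fun_eq_iff phi_def phi1_def front_def front1_def phase_def)
  obtain D1 where lower: "\<And>d1 d t0 u0 u t j. D1 \<le> d1 \<Longrightarrow> 0 < d \<Longrightarrow> d \<le> 2 \<Longrightarrow> lattice_solution f t0 u0 u \<Longrightarrow>
      \<forall>j. 0 \<le> u0 j \<Longrightarrow> \<forall>j. d * front t0 j - d1 * front1 t0 j \<le> u0 j \<Longrightarrow> t0 \<le> t \<Longrightarrow>
      d * front t j - d1 * front1 t j \<le> u t j"
    using solution_ge_lower_front by blast
  show ?thesis
    unfolding \<phi>_eq \<phi>1_eq linf_plus_def
    by (intro exI[of _ "max D1 0"] allI impI conjI solution_le_upper_front lower) auto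
qed

end
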